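(* Let $R,S$ be rings and $M$ an $(S,R)$-bimodule such that the coinduction functor $G={}_S\mathrm{Hom}(M,\bullet):{}_S\mathcal{M}\to{}_R\mathcal{M}$ is naturally full, and let $\sum_{i=1}^n m_i\otimes_R f_i\in(M\otimes_R{}^*M)^S$ satisfy $m\otimes_R\mathrm{id}_M=\sum_{i=1}^n m_i\otimes_R((?)f_i\,m)$ in $M\otimes_R{}_S\mathrm{End}(M)$ for all $m\in M$. Then $e=\sum_{i=1}^n (m_i)f_i$ is a central idempotent of $S$, and $sm=sem=esem$ for all $s\in S$, $m\in M$. Therefore $S\cong S_1\times S_2$ where $S_1=eSe$, $S$ acts on $M$ via $S_1$, and $M$ is a generator in ${}_{S_1}\mathcal{M}$.
   Context: Left $S$-linear maps are written on the right: $(m)f$. For $Q\in{}_S\mathcal{M}$, ${}_S\mathrm{Hom}(M,Q)$ is a left $R$-module via $(m)(r\cdot f)=(mr)f$; ${}^*M={}_S\mathrm{Hom}(M,S)$ is an $(R,S)$-bimodule via $(m)(r\cdot f\cdot s)=((mr)f)s$; $(M\otimes_R{}^*M)^S=\{x: sx=xs\ \forall s\in S\}$. $(?)f_i\,m$ denotes the endomorphism $x\mapsto((x)f_i)m$ of $M$. A functor $F:\mathcal{A}\to\mathcal{B}$ is naturally full if there are maps $\mathcal{P}_{A,A'}:\mathrm{Hom}_{\mathcal{B}}(FA,FA')\to\mathrm{Hom}_{\mathcal{A}}(A,A')$, natural in $A,A'$, with $F(\mathcal{P}_{A,A'}(u))=u$ for all $u$. *)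

theory Defs
  imports Main "HOL-Library.FuncSet"
begin

text \<open>A left module over the scalars K (a subset of the ring type 's, with unit u):
  carrier, addition, zero and scalar action.  Left S-modules are the case K = UNIV, u = 1.\<close>

record ('s, 'q) lmodule =
  carrier :: "'q set"
  plus    :: "'q \<Rightarrow> 'q \<Rightarrow> 'q"
  zero    :: "'q"
  smult   :: "'s \<Rightarrow> 'q \<Rightarrow> 'q"

definition is_lmod_on :: "'s::ring_1 set \<Rightarrow> 's \<Rightarrow> ('s, 'q) lmodule \<Rightarrow> bool" where
  "is_lmod_on K u A \<longleftrightarrow>
     zero A \<in> carrier A \<and>
     (\<forall>x\<in>carrier A. \<forall>y\<in>carrier A. plus A x y \<in> carrier A) \<and>
     (\<forall>x\<in>carrier A. \<forall>y\<in>carrier A. \<forall>z\<in>carrier A. plus A (plus A x y) z = plus A x (plus A y z)) \<and>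
     (\<forall>x\<in>carrier A. \<forall>y\<in>carrier A. plus A x y = plus A y x) \<and>
     (\<forall>x\<in>carrier A. plus A (zero A) x = x) \<and>
     (\<forall>x\<in>carrier A. \<exists>y\<in>carrier A. plus A x y = zero A) \<and>
     (\<forall>k\<in>K. \<forall>x\<in>carrier A. smult A k x \<in> carrier A) \<and>
     (\<forall>k\<in>K. \<forall>x\<in>carrier A. \<forall>y\<in>carrier A. smult A k (plus A x y) = plus A (smult A k x) (smult A k y)) \<and>
     (\<forall>k\<in>K. \<forall>l\<in>K. \<forall>x\<in>carrier A. smult A (k + l) x = plus A (smult A k x) (smult A l x)) \<and>
     (\<forall>k\<in>K. \<forall>l\<in>K. \<forall>x\<in>carrier A. smult A (k * l) x = smult A k (smult A l x)) \<and>
     (\<forall>x\<in>carrier A. smult A u x = x)"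

abbreviation is_lmod :: "('s::ring_1, 'q) lmodule \<Rightarrow> bool" where
  "is_lmod A \<equiv> is_lmod_on UNIV 1 A"

definition lhom_on :: "'s set \<Rightarrow> ('s, 'a) lmodule \<Rightarrow> ('s, 'b) lmodule \<Rightarrow> ('a \<Rightarrow> 'b) set" where
  "lhom_on K A B = {f. f \<in> extensional (carrier A) \<and> f ` carrier A \<subseteq> carrier B \<and>
     (\<forall>x\<in>carrier A. \<forall>y\<in>carrier A. f (plus A x y) = plus B (f x) (f y)) \<and>
     (\<forall>k\<in>K. \<forall>x\<in>carrier A. f (smult A k x) = smult B k (f x))}"

abbreviation lhom :: "('s, 'a) lmodule \<Rightarrow> ('s, 'b) lmodule \<Rightarrow> ('a \<Rightarrow> 'b) set" where
  "lhom A B \<equiv> lhom_on UNIV A B"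

definition bimodule :: "('s::ring_1 \<Rightarrow> 'm::ab_group_add \<Rightarrow> 'm) \<Rightarrow> ('m \<Rightarrow> 'r::ring_1 \<Rightarrow> 'm) \<Rightarrow> bool" where
  "bimodule ls rs \<longleftrightarrow>
     (\<forall>s m m'. ls s (m + m') = ls s m + ls s m') \<and>
     (\<forall>s t m. ls (s + t) m = ls s m + ls t m) \<and>
     (\<forall>s t m. ls (s * t) m = ls s (ls t m)) \<and>
     (\<forall>m. ls 1 m = m) \<and>
     (\<forall>m m' r. rs (m + m') r = rs m r + rs m' r) \<and>
     (\<forall>m r r'. rs m (r + r') = rs m r + rs m r') \<and>
     (\<forall>m r r'. rs m (r * r') = rs (rs m r) r') \<and>
     (\<forall>m. rs m 1 = m) \<and>
     (\<forall>s m r. ls s (rs m r) = rs (ls s m) r)"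

definition Mmod :: "('s \<Rightarrow> 'm::ab_group_add \<Rightarrow> 'm) \<Rightarrow> ('s, 'm) lmodule" where
  "Mmod ls = \<lparr>carrier = UNIV, plus = (+), zero = 0, smult = ls\<rparr>"

definition Smod :: "('s::ring_1, 's) lmodule" where
  "Smod = \<lparr>carrier = UNIV, plus = (+), zero = 0, smult = (*)\<rparr>"

text \<open>Maps are written on the right in the paper: (m)f is f m here.
  ${}^*M = {}_S\mathrm{Hom}(M,S)$ and ${}_S\mathrm{End}(M)$:\<close>
definition dualM :: "('s::ring_1 \<Rightarrow> 'm::ab_group_add \<Rightarrow> 'm) \<Rightarrow> ('m \<Rightarrow> 's) set" where
  "dualM ls = lhom (Mmod ls) Smod"

definition EndM :: "('s::ring_1 \<Rightarrow> 'm::ab_group_add \<Rightarrow> 'm) \<Rightarrow> ('m \<Rightarrow> 'm) set" where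
  "EndM ls = lhom (Mmod ls) (Mmod ls)"

definition Gobj :: "('s::ring_1 \<Rightarrow> 'm::ab_group_add \<Rightarrow> 'm) \<Rightarrow> ('m \<Rightarrow> 'r \<Rightarrow> 'm) \<Rightarrow>
    ('s, 'q) lmodule \<Rightarrow> ('r, 'm \<Rightarrow> 'q) lmodule" where
  "Gobj ls rs Q = \<lparr>carrier = lhom (Mmod ls) Q,
                   plus = (\<lambda>\<phi> \<psi> m. plus Q (\<phi> m) (\<psi> m)),
                   zero = (\<lambda>m. zero Q),
                   smult = (\<lambda>r \<phi> m. \<phi> (rs m r))\<rparr>"

definition Gmor :: "('s::ring_1 \<Rightarrow> 'm::ab_group_add \<Rightarrow> 'm) \<Rightarrow> ('s, 'q) lmodule \<Rightarrow>
    ('q \<Rightarrow> 'q) \<Rightarrow> (('m \<Rightarrow> 'q) \<Rightarrow> ('m \<Rightarrow> 'q))" where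
  "Gmor ls Q u = (\<lambda>\<phi>\<in>lhom (Mmod ls) Q. u \<circ> \<phi>)"

text \<open>Natural fullness of G, on the full subcategory of S-modules whose carriers live in the
  type 'q.\<close>
definition coind_naturally_full ::
    "('s::ring_1 \<Rightarrow> 'm::ab_group_add \<Rightarrow> 'm) \<Rightarrow> ('m \<Rightarrow> 'r::ring_1 \<Rightarrow> 'm) \<Rightarrow> 'q itself \<Rightarrow> bool" where
  "coind_naturally_full ls rs (_::'q itself) \<longleftrightarrow>
    (\<exists>P :: ('s, 'q) lmodule \<Rightarrow> ('s, 'q) lmodule \<Rightarrow> (('m \<Rightarrow> 'q) \<Rightarrow> ('m \<Rightarrow> 'q)) \<Rightarrow> ('q \<Rightarrow> 'q).
      (\<forall>A B. is_lmod A \<and> is_lmod B \<longrightarrow>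
         (\<forall>u\<in>lhom (Gobj ls rs A) (Gobj ls rs B).
            P A B u \<in> lhom A B \<and> Gmor ls A (P A B u) = u)) \<and>
      (\<forall>A B A1 B1 a b u. is_lmod A \<and> is_lmod B \<and> is_lmod A1 \<and> is_lmod B1 \<and>
         a \<in> lhom A1 A \<and> b \<in> lhom B B1 \<and> u \<in> lhom (Gobj ls rs A) (Gobj ls rs B) \<longrightarrow>
         P A1 B1 (compose (carrier (Gobj ls rs A1)) (Gmor ls B b)
                     (compose (carrier (Gobj ls rs A1)) u (Gmor ls A1 a)))
         = compose (carrier A1) b (compose (carrier A1) (P A B u) a)))"

section \<open>Tensor products over R (as the free abelian group on pairs modulo relations)\<close>

definition delta :: "'a \<times> 'b \<Rightarrow> ('a \<times> 'b \<Rightarrow> int)" where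
  "delta p = (\<lambda>q. if q = p then 1 else 0)"

text \<open>The subgroup of relations defining A \<otimes>_R B, where A = type 'a (right R-module via rsA)
  and B = Bc (a left R-module with addition addB and action lactB); the free abelian group
  on A \<times> B is represented by finitely supported integer-valued functions.\<close>
inductive_set tensor_null ::
    "('a::ab_group_add \<Rightarrow> 'r \<Rightarrow> 'a) \<Rightarrow> 'b set \<Rightarrow> ('b \<Rightarrow> 'b \<Rightarrow> 'b) \<Rightarrow> ('r \<Rightarrow> 'b \<Rightarrow> 'b)
      \<Rightarrow> ('a \<times> 'b \<Rightarrow> int) set"
  for rsA Bc addB lactB where
  tn_zero: "(\<lambda>_. 0) \<in> tensor_null rsA Bc addB lactB"
| tn_diff: "x \<in> tensor_null rsA Bc addB lactB \<Longrightarrow> y \<in> tensor_null rsA Bc addB lactB \<Longrightarrow>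
      (\<lambda>p. x p - y p) \<in> tensor_null rsA Bc addB lactB"
| tn_addl: "b \<in> Bc \<Longrightarrow>
      (\<lambda>p. delta (a + a', b) p - delta (a, b) p - delta (a', b) p) \<in> tensor_null rsA Bc addB lactB"
| tn_addr: "b \<in> Bc \<Longrightarrow> b' \<in> Bc \<Longrightarrow>
      (\<lambda>p. delta (a, addB b b') p - delta (a, b) p - delta (a, b') p) \<in> tensor_null rsA Bc addB lactB"
| tn_bal: "b \<in> Bc \<Longrightarrow>
      (\<lambda>p. delta (rsA a r, b) p - delta (a, lactB r b) p) \<in> tensor_null rsA Bc addB lactB"

definition formal_sum :: "nat \<Rightarrow> (nat \<Rightarrow> 'a) \<Rightarrow> (nat \<Rightarrow> 'b) \<Rightarrow> ('a \<times> 'b \<Rightarrow> int)" where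
  "formal_sum n xs ys = (\<lambda>q. \<Sum>i<n. delta (xs i, ys i) q)"

definition tensor_eq ::
    "('a::ab_group_add \<Rightarrow> 'r \<Rightarrow> 'a) \<Rightarrow> 'b set \<Rightarrow> ('b \<Rightarrow> 'b \<Rightarrow> 'b) \<Rightarrow> ('r \<Rightarrow> 'b \<Rightarrow> 'b)
      \<Rightarrow> nat \<Rightarrow> (nat \<Rightarrow> 'a) \<Rightarrow> (nat \<Rightarrow> 'b) \<Rightarrow> nat \<Rightarrow> (nat \<Rightarrow> 'a) \<Rightarrow> (nat \<Rightarrow> 'b) \<Rightarrow> bool" where
  "tensor_eq rsA Bc addB lactB n xs ys k xs' ys' \<longleftrightarrow>
     (\<lambda>p. formal_sum n xs ys p - formal_sum k xs' ys' p) \<in> tensor_null rsA Bc addB lactB"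

abbreviation tensor_eq_dual where
  "tensor_eq_dual ls rs \<equiv> tensor_eq rs (dualM ls) (\<lambda>f g x. f x + g x) (\<lambda>r f x. f (rs x r))"

abbreviation tensor_eq_End where
  "tensor_eq_End ls rs \<equiv> tensor_eq rs (EndM ls) (\<lambda>f g x. f x + g x) (\<lambda>r f x. f (rs x r))"

primrec msum :: "('s, 'q) lmodule \<Rightarrow> nat \<Rightarrow> (nat \<Rightarrow> 'q) \<Rightarrow> 'q" where
  "msum N 0 g = zero N"
| "msum N (Suc k) g = plus N (msum N k g) (g k)"

text \<open>M is a generator of the category of left modules over the ring K (unit u): every
  K-module N is an epimorphic image of a direct sum of copies of M, i.e. every element of N is
  a finite sum of images of elements of M under K-linear maps M \<rightarrow> N.  Modules N range over
  all carriers in an arbitrary type 'v (universally quantified in the theorem).\<close>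
definition is_generator_on ::
    "'s::ring_1 set \<Rightarrow> 's \<Rightarrow> ('s, 'm) lmodule \<Rightarrow> 'v itself \<Rightarrow> bool" where
  "is_generator_on K u Mo (_::'v itself) \<longleftrightarrow>
     (\<forall>N :: ('s, 'v) lmodule. is_lmod_on K u N \<longrightarrow>
        (\<forall>x\<in>carrier N. \<exists>k hs ms. (\<forall>j<k. hs j \<in> lhom_on K Mo N) \<and>
            x = msum N k (\<lambda>j. hs j (ms j))))"

end

theory Submission
  imports Defs
begin

(* Evaluation (x, g) \<mapsto> (x)g is R-balanced, so it factors through the tensor products
   M \<otimes>_R *M and M \<otimes>_R End_S(M).  Applied to m \<otimes> id = \<Sum> m_i \<otimes> (?)f_i m it gives
   m = \<Sum> ((m_i)f_i) m = e m, so e acts as the identity on M; applied to the S-invariance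
   s m_i \<otimes> f_i = m_i \<otimes> f_i s it gives s e = e s.  Then (m)f_i = (e m)f_i = e (m)f_i, so e is
   idempotent and every (m)f_i lies in eSe.  The Peirce decomposition along the central
   idempotent e splits S, and x = e x = \<Sum> (m_i)f_i x writes every element of an eSe-module
   through the eSe-linear maps m \<mapsto> (m)f_i x. *)

definition int_mult :: "int \<Rightarrow> 'a::ab_group_add \<Rightarrow> 'a" where
  "int_mult k v = (\<Sum>i<nat k. v) - (\<Sum>i<nat (- k). v)"

lemma sum_const_lessThan_add:
  fixes p q :: nat and v :: "'a::comm_monoid_add"
  shows "(\<Sum>i<p + q. v) = (\<Sum>i<p. v) + (\<Sum>i<q. v)"
  by (induction q) (simp_all add: add.assoc)

lemma int_mult_add: "int_mult (a + b) v = int_mult a v + int_mult b v"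
proof -
  let ?N = "\<lambda>n. \<Sum>i<n. v"
  have N_diff_cong: "?N p - ?N q = ?N p' - ?N q'" if "int p - int q = int p' - int q'" for p q p' q'
  proof -
    from that have "p + q' = p' + q" by linarith
    then have "?N p + ?N q' = ?N p' + ?N q" by (simp flip: sum_const_lessThan_add)
    then show ?thesis
      by (simp add: diff_eq_eq diff_add_eq eq_diff_eq)
  qed
  have "int_mult (a + b) v = ?N (nat (a + b)) - ?N (nat (- (a + b)))"
    by (simp add: int_mult_def)
  also have "\<dots> = ?N (nat a + nat b) - ?N (nat (- a) + nat (- b))"
    by (rule N_diff_cong) linarith
  also have "\<dots> = (?N (nat a) - ?N (nat (- a))) + (?N (nat b) - ?N (nat (- b)))"
    unfolding sum_const_lessThan_add by (simp add: diff_add_eq add_diff_eq diff_diff_eq)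
  also have "\<dots> = int_mult a v + int_mult b v"
    by (simp add: int_mult_def)
  finally show ?thesis .
qed

lemma int_mult_zero [simp]: "int_mult 0 v = 0"
  by (simp add: int_mult_def)

lemma int_mult_one [simp]: "int_mult 1 v = v"
  by (simp add: int_mult_def)

lemma int_mult_diff: "int_mult (a - b) v = int_mult a v - int_mult b v"
  using int_mult_add[of "a - b" b v] by (simp add: algebra_simps)

definition free_ab_lift :: "('p \<Rightarrow> 'a::ab_group_add) \<Rightarrow> ('p \<Rightarrow> int) \<Rightarrow> 'a" where
  "free_ab_lift \<beta> x = (\<Sum>p\<in>{p. x p \<noteq> 0}. int_mult (x p) (\<beta> p))"

lemma free_ab_lift_eq:
  assumes "finite F" and "{p. x p \<noteq> 0} \<subseteq> F"
  shows "free_ab_lift \<beta> x = (\<Sum>p\<in>F. int_mult (x p) (\<beta> p))"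
  unfolding free_ab_lift_def by (rule sum.mono_neutral_left) (use assms in auto)

lemma free_ab_lift_add:
  assumes "finite {p. x p \<noteq> 0}" and "finite {p. y p \<noteq> 0}"
  shows "free_ab_lift \<beta> (\<lambda>p. x p + y p) = free_ab_lift \<beta> x + free_ab_lift \<beta> y"
proof -
  let ?F = "{p. x p \<noteq> 0} \<union> {p. y p \<noteq> 0}"
  have "finite ?F" using assms by simp
  then show ?thesis
    by (subst (1 2 3) free_ab_lift_eq[of ?F]) (auto simp: int_mult_add sum.distrib)
qed

lemma free_ab_lift_diff:
  assumes "finite {p. x p \<noteq> 0}" and "finite {p. y p \<noteq> 0}"
  shows "free_ab_lift \<beta> (\<lambda>p. x p - y p) = free_ab_lift \<beta> x - free_ab_lift \<beta> y"
proof -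
  let ?F = "{p. x p \<noteq> 0} \<union> {p. y p \<noteq> 0}"
  have "finite ?F" using assms by simp
  then show ?thesis
    by (subst (1 2 3) free_ab_lift_eq[of ?F]) (auto simp: int_mult_diff sum_subtractf)
qed

lemma finite_support_delta [simp]: "finite {p. delta q p \<noteq> 0}"
  by (simp add: delta_def)

lemma free_ab_lift_delta [simp]: "free_ab_lift \<beta> (delta q) = \<beta> q"
  by (simp add: free_ab_lift_eq[of "{q}"] delta_def)

lemma finite_support_diff:
  "finite {p. x p \<noteq> 0} \<Longrightarrow> finite {p. y p \<noteq> 0} \<Longrightarrow> finite {p. x p \<noteq> (y p :: int)}"
  by (rule finite_subset[of _ "{p. x p \<noteq> 0} \<union> {p. y p \<noteq> 0}"]) auto

lemma free_ab_lift_formal_sum: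
  "finite {p. formal_sum n xs ys p \<noteq> 0} \<and>
   free_ab_lift \<beta> (formal_sum n xs ys) = (\<Sum>i<n. \<beta> (xs i, ys i))"
proof (induction n)
  case 0
  then show ?case by (simp add: formal_sum_def free_ab_lift_def)
next
  case (Suc n)
  have fin: "finite {p. formal_sum n xs ys p \<noteq> 0}"
    and val: "free_ab_lift \<beta> (formal_sum n xs ys) = (\<Sum>i<n. \<beta> (xs i, ys i))"
    using Suc.IH by blast+
  have step: "formal_sum (Suc n) xs ys = (\<lambda>p. formal_sum n xs ys p + delta (xs n, ys n) p)"
    by (simp add: formal_sum_def fun_eq_iff)
  have "finite {p. formal_sum n xs ys p + delta (xs n, ys n) p \<noteq> 0}"
    by (rule finite_subset[of _ "{p. formal_sum n xs ys p \<noteq> 0} \<union> {(xs n, ys n)}"])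
      (use fin in \<open>auto simp: delta_def\<close>)
  moreover have "free_ab_lift \<beta> (\<lambda>p. formal_sum n xs ys p + delta (xs n, ys n) p)
      = (\<Sum>i<Suc n. \<beta> (xs i, ys i))"
    using free_ab_lift_add[OF fin finite_support_delta[of "(xs n, ys n)"], of \<beta>] val by simp
  ultimately show ?case
    unfolding step by blast
qed

definition balanced_map ::
    "('a::ab_group_add \<Rightarrow> 'r \<Rightarrow> 'a) \<Rightarrow> 'b set \<Rightarrow> ('b \<Rightarrow> 'b \<Rightarrow> 'b) \<Rightarrow> ('r \<Rightarrow> 'b \<Rightarrow> 'b)
      \<Rightarrow> ('a \<Rightarrow> 'b \<Rightarrow> 'c::ab_group_add) \<Rightarrow> bool" where
  "balanced_map rsA Bc addB lactB \<beta> \<longleftrightarrow>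
     (\<forall>a a'. \<forall>b\<in>Bc. \<beta> (a + a') b = \<beta> a b + \<beta> a' b) \<and>
     (\<forall>a. \<forall>b\<in>Bc. \<forall>b'\<in>Bc. \<beta> a (addB b b') = \<beta> a b + \<beta> a b') \<and>
     (\<forall>a r. \<forall>b\<in>Bc. \<beta> (rsA a r) b = \<beta> a (lactB r b))"

lemma tensor_null_free_ab_lift:
  assumes "x \<in> tensor_null rsA Bc addB lactB" and "balanced_map rsA Bc addB lactB \<beta>"
  shows "finite {p. x p \<noteq> 0} \<and> free_ab_lift (case_prod \<beta>) x = 0"
  using assms(1)
proof induction
  case tn_zero
  then show ?case by (simp add: free_ab_lift_def)
next
  case (tn_diff x y)
  then show ?case by (simp add: free_ab_lift_diff finite_support_diff)
qed (use assms(2) in \<open>simp_all add: free_ab_lift_diff finite_support_diff balanced_map_def\<close>)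

lemma tensor_eq_balanced_sum:
  assumes "tensor_eq rsA Bc addB lactB n xs ys k xs' ys'" and "balanced_map rsA Bc addB lactB \<beta>"
  shows "(\<Sum>i<n. \<beta> (xs i) (ys i)) = (\<Sum>i<k. \<beta> (xs' i) (ys' i))"
proof -
  have "free_ab_lift (case_prod \<beta>) (\<lambda>p. formal_sum n xs ys p - formal_sum k xs' ys' p) = 0"
    using tensor_null_free_ab_lift assms unfolding tensor_eq_def by blast
  then show ?thesis
    using free_ab_lift_formal_sum[of n xs ys "case_prod \<beta>"]
      free_ab_lift_formal_sum[of k xs' ys' "case_prod \<beta>"]
    by (simp add: free_ab_lift_diff)
qed

lemma tensor_eq_evaluation:
  fixes Bc :: "('a::ab_group_add \<Rightarrow> 'c::ab_group_add) set"
  assumes "tensor_eq rsA Bc (\<lambda>f g x. f x + g x) (\<lambda>r f x. f (rsA x r)) n xs ys k xs' ys'"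
    and "\<forall>f\<in>Bc. \<forall>a a'. f (a + a') = f a + f a'"
  shows "(\<Sum>i<n. ys i (xs i)) = (\<Sum>i<k. ys' i (xs' i))"
proof -
  have "balanced_map rsA Bc (\<lambda>f g x. f x + g x) (\<lambda>r f x. f (rsA x r)) (\<lambda>a f. f a)"
    using assms(2) by (simp add: balanced_map_def)
  with assms(1) show ?thesis by (rule tensor_eq_balanced_sum)
qed

lemma is_lmod_onD:
  assumes "is_lmod_on K u N"
  shows lmod_zero_closed: "zero N \<in> carrier N"
    and lmod_plus_assoc: "\<lbrakk>x \<in> carrier N; y \<in> carrier N; z \<in> carrier N\<rbrakk> \<Longrightarrow>
      plus N (plus N x y) z = plus N x (plus N y z)"
    and lmod_plus_comm: "\<lbrakk>x \<in> carrier N; y \<in> carrier N\<rbrakk> \<Longrightarrow> plus N x y = plus N y x"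
    and lmod_zero_plus: "x \<in> carrier N \<Longrightarrow> plus N (zero N) x = x"
    and lmod_neg_exists: "x \<in> carrier N \<Longrightarrow> \<exists>y\<in>carrier N. plus N x y = zero N"
    and lmod_smult_closed: "\<lbrakk>k \<in> K; x \<in> carrier N\<rbrakk> \<Longrightarrow> smult N k x \<in> carrier N"
    and lmod_add_smult: "\<lbrakk>k \<in> K; l \<in> K; x \<in> carrier N\<rbrakk> \<Longrightarrow>
      smult N (k + l) x = plus N (smult N k x) (smult N l x)"
    and lmod_mult_smult: "\<lbrakk>k \<in> K; l \<in> K; x \<in> carrier N\<rbrakk> \<Longrightarrow>
      smult N (k * l) x = smult N k (smult N l x)"
    and lmod_unit_smult: "x \<in> carrier N \<Longrightarrow> smult N u x = x"
  using assms unfolding is_lmod_on_def by blast+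

lemma lmod_smult_zero:
  assumes N: "is_lmod_on K u N" and K_zero: "0 \<in> K" and x: "x \<in> carrier N"
  shows "smult N 0 x = zero N"
proof -
  let ?a = "smult N 0 x"
  have a: "?a \<in> carrier N"
    using lmod_smult_closed[OF N K_zero x] .
  have aa: "plus N ?a ?a = ?a"
    using lmod_add_smult[OF N K_zero K_zero x] by simp
  obtain y where y: "y \<in> carrier N" "plus N ?a y = zero N"
    using lmod_neg_exists[OF N a] by blast
  have "zero N = plus N (plus N ?a ?a) y"
    using aa y by simp
  also have "\<dots> = plus N ?a (zero N)"
    using lmod_plus_assoc[OF N a a y(1)] y by simp
  also have "\<dots> = ?a"
    using lmod_plus_comm[OF N a lmod_zero_closed[OF N]] lmod_zero_plus[OF N a] by simp
  finally show ?thesis by simp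
qed

lemma msum_smult:
  fixes k :: nat
  assumes N: "is_lmod_on K u N" and x: "x \<in> carrier N"
    and K_add: "\<forall>k\<in>K. \<forall>l\<in>K. k + l \<in> K" and K_zero: "0 \<in> K" and c: "\<forall>j<k. c j \<in> K"
  shows "msum N k (\<lambda>j. smult N (c j) x) = smult N (\<Sum>j<k. c j) x"
  using c
proof (induction k)
  case 0
  then show ?case using lmod_smult_zero[OF N K_zero x] by simp
next
  case (Suc k)
  have "(\<Sum>j<k. c j) \<in> K"
    using Suc.prems K_add K_zero by (induction k) auto
  then show ?case
    using Suc lmod_add_smult[OF N _ _ x] by simp
qed

lemma lhom_on_mono: "K \<subseteq> K' \<Longrightarrow> lhom_on K' A B \<subseteq> lhom_on K A B"
  unfolding lhom_on_def by blast

lemma is_generator_on_dual_basis: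
  fixes ls :: "'s::ring_1 \<Rightarrow> 'm::ab_group_add \<Rightarrow> 'm" and n :: nat
  assumes K_add: "\<forall>k\<in>K. \<forall>l\<in>K. k + l \<in> K" and K_zero: "0 \<in> K"
    and fs_K: "\<forall>i<n. \<forall>m. fs i m \<in> K"
    and fs_hom: "\<forall>i<n. fs i \<in> lhom_on K (Mmod ls) Smod"
    and unit: "u = (\<Sum>i<n. fs i (ms i))"
  shows "is_generator_on K u (Mmod ls) TYPE('v)"
  unfolding is_generator_on_def
proof (intro allI impI ballI)
  fix N :: "('s, 'v) lmodule" and x
  assume N: "is_lmod_on K u N" and x: "x \<in> carrier N"
  have "(\<lambda>m. smult N (fs i m) x) \<in> lhom_on K (Mmod ls) N" if "i < n" for i
    using that fs_K fs_hom lmod_smult_closed[OF N _ x] lmod_add_smult[OF N _ _ x]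
      lmod_mult_smult[OF N _ _ x]
    unfolding lhom_on_def Mmod_def Smod_def by (auto simp: extensional_def)
  moreover have "x = msum N n (\<lambda>i. smult N (fs i (ms i)) x)"
    using msum_smult[OF N x K_add K_zero] fs_K lmod_unit_smult[OF N x] unit by simp
  ultimately show "\<exists>k hs ms. (\<forall>j<k. hs j \<in> lhom_on K (Mmod ls) N) \<and> x = msum N k (\<lambda>j. hs j (ms j))"
    by (intro exI[of _ n] exI[of _ "\<lambda>i m. smult N (fs i m) x"] exI[of _ ms]) simp
qed

definition central_idempotent :: "'a::ring_1 \<Rightarrow> bool" where
  "central_idempotent e \<longleftrightarrow> (\<forall>s. e * s = s * e) \<and> e * e = e"

lemma central_idempotentD:
  assumes "central_idempotent e"
  shows central_idempotent_commute: "e * s = s * e" and central_idempotent_idem: "e * e = e"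
  using assms unfolding central_idempotent_def by blast+

lemma central_idempotent_complement:
  assumes "central_idempotent e"
  shows "central_idempotent (1 - e)"
  unfolding central_idempotent_def
proof (intro allI conjI)
  show "(1 - e) * s = s * (1 - e)" for s
    using central_idempotent_commute[OF assms, of s] by (simp add: algebra_simps)
  show "(1 - e) * (1 - e) = 1 - e"
    using central_idempotent_idem[OF assms] by (simp add: algebra_simps)
qed

lemma central_idempotent_corner:
  assumes "central_idempotent e"
  shows "e * s * e = e * s"
  by (metis assms central_idempotentD mult.assoc)

lemma central_idempotent_corner_mult:
  assumes "central_idempotent e"
  shows "e * (s * t) = (e * s) * (e * t)"
  by (metis assms central_idempotentD mult.assoc)

lemma central_idempotent_corner_eq:
  assumes "central_idempotent e"
  shows "{e * s * e | s. True} = range ((*) e)"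
  using central_idempotent_corner[OF assms] by auto

lemma central_idempotent_corner_iff:
  assumes "central_idempotent e"
  shows "y \<in> {e * s * e | s. True} \<longleftrightarrow> e * y = y"
  unfolding central_idempotent_corner_eq[OF assms]
proof
  assume "y \<in> range ((*) e)"
  then obtain s where "y = e * s" by blast
  then show "e * y = y"
    using central_idempotent_idem[OF assms] by (simp flip: mult.assoc)
next
  assume "e * y = y"
  then show "y \<in> range ((*) e)" by (metis rangeI)
qed

lemma central_idempotent_ring_decomposition:
  fixes e :: "'s::ring_1"
  assumes e: "central_idempotent e"
  shows "\<exists>\<phi> :: 's \<Rightarrow> 's \<times> 's.
           bij_betw \<phi> UNIV ({e * s * e | s. True} \<times> {(1 - e) * s * (1 - e) | s. True}) \<and>
           (\<forall>s t. \<phi> (s + t) = (fst (\<phi> s) + fst (\<phi> t), snd (\<phi> s) + snd (\<phi> t))) \<and>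
           (\<forall>s t. \<phi> (s * t) = (fst (\<phi> s) * fst (\<phi> t), snd (\<phi> s) * snd (\<phi> t))) \<and>
           \<phi> 1 = (e, 1 - e)"
proof (intro exI conjI allI)
  have e': "central_idempotent (1 - e)"
    using e by (rule central_idempotent_complement)
  have orth: "e * (1 - e) = 0" "(1 - e) * e = 0"
    using central_idempotent_idem[OF e] by (simp_all add: algebra_simps)
  let ?\<phi> = "\<lambda>s. (e * s, (1 - e) * s)"
  show "bij_betw ?\<phi> UNIV ({e * s * e | s. True} \<times> {(1 - e) * s * (1 - e) | s. True})"
    unfolding central_idempotent_corner_eq[OF e] central_idempotent_corner_eq[OF e']
  proof (rule bij_betw_byWitness[where f' = "\<lambda>(a, b). a + b"])
    show "\<forall>s\<in>UNIV. (\<lambda>(a, b). a + b) (?\<phi> s) = s"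
      by (simp add: algebra_simps)
    show "\<forall>y\<in>range ((*) e) \<times> range ((*) (1 - e)). ?\<phi> ((\<lambda>(a, b). a + b) y) = y"
      using orth central_idempotent_idem[OF e] central_idempotent_idem[OF e']
      by (auto simp: distrib_left simp flip: mult.assoc)
  qed auto
  show "?\<phi> (s + t) = (fst (?\<phi> s) + fst (?\<phi> t), snd (?\<phi> s) + snd (?\<phi> t))" for s t
    by (simp add: distrib_left)
  show "?\<phi> (s * t) = (fst (?\<phi> s) * fst (?\<phi> t), snd (?\<phi> s) * snd (?\<phi> t))" for s t
    using central_idempotent_corner_mult[OF e] central_idempotent_corner_mult[OF e'] by simp
  show "?\<phi> 1 = (e, 1 - e)"
    by simp
qed

lemma bimodule_smult_sum:
  assumes "bimodule ls rs"
  shows "ls (\<Sum>i\<in>A. c i) m = (\<Sum>i\<in>A. ls (c i) m)"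
proof -
  have add: "ls (s + t) m = ls s m + ls t m" for s t
    using assms unfolding bimodule_def by blast
  then have "ls 0 m = 0"
    by (metis add_0 add_cancel_right_right)
  with add show ?thesis
    using sum_comp_morphism[of "\<lambda>s. ls s m" c A] by (simp add: o_def)
qed

lemma dualM_add: "f \<in> dualM ls \<Longrightarrow> f (a + b) = f a + f b"
  unfolding dualM_def lhom_on_def Mmod_def Smod_def by simp

lemma dualM_smult: "f \<in> dualM ls \<Longrightarrow> f (ls s m) = s * f m"
  unfolding dualM_def lhom_on_def Mmod_def Smod_def by simp

lemma EndM_add: "f \<in> EndM ls \<Longrightarrow> f (a + b) = f a + f b"
  unfolding EndM_def lhom_on_def Mmod_def by simp

lemma bimodule_smult_corner:
  assumes "bimodule ls rs" and e: "central_idempotent e" and "\<forall>m. ls e m = m"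
  shows "ls s m = ls (s * e) m \<and> ls (s * e) m = ls (e * s * e) m"
proof -
  have "ls (s * t) m = ls s (ls t m)" for s t m
    using assms(1) unfolding bimodule_def by blast
  then show ?thesis
    using assms(3) central_idempotent_corner[OF e] central_idempotent_commute[OF e, of s] by simp
qed

lemma dual_basis_sum_acts_as_one:
  assumes bimod: "bimodule ls rs"
    and cond: "tensor_eq_End ls rs 1 (\<lambda>_. m) (\<lambda>_. id) n ms (\<lambda>i x. ls (fs i x) m)"
  shows "ls (\<Sum>i<n. fs i (ms i)) m = m"
proof -
  have "(\<Sum>i<1::nat. id m) = (\<Sum>i<n. ls (fs i (ms i)) m)"
    using tensor_eq_evaluation[OF cond] EndM_add by blast
  then show ?thesis
    by (simp add: bimodule_smult_sum[OF bimod])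
qed

lemma dual_basis_values_in_corner:
  assumes bimod: "bimodule ls rs"
    and cond: "\<forall>m. tensor_eq_End ls rs 1 (\<lambda>_. m) (\<lambda>_. id) n ms (\<lambda>i x. ls (fs i x) m)"
    and "fs i \<in> dualM ls"
  shows "(\<Sum>j<n. fs j (ms j)) * fs i m = fs i m"
  using dualM_smult[OF assms(3)] dual_basis_sum_acts_as_one[OF bimod cond[rule_format]] by metis

lemma dual_basis_sum_central:
  assumes fs_dual: "\<forall>i<n. fs i \<in> dualM ls"
    and invariant: "tensor_eq_dual ls rs n (\<lambda>i. ls s (ms i)) fs n ms (\<lambda>i x. fs i x * s)"
  shows "(\<Sum>i<n. fs i (ms i)) * s = s * (\<Sum>i<n. fs i (ms i))"
proof -
  have "(\<Sum>i<n. fs i (ls s (ms i))) = (\<Sum>i<n. fs i (ms i) * s)"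
    using tensor_eq_evaluation[OF invariant] dualM_add by blast
  then have "(\<Sum>i<n. fs i (ms i)) * s = (\<Sum>i<n. fs i (ls s (ms i)))"
    by (simp add: sum_distrib_right)
  also have "\<dots> = s * (\<Sum>i<n. fs i (ms i))"
    using fs_dual by (simp add: sum_distrib_left dualM_smult)
  finally show ?thesis .
qed

lemma dual_basis_sum_central_idempotent:
  assumes bimod: "bimodule ls rs"
    and fs_dual: "\<forall>i<n. fs i \<in> dualM ls"
    and invariant: "\<forall>s. tensor_eq_dual ls rs n (\<lambda>i. ls s (ms i)) fs n ms (\<lambda>i x. fs i x * s)"
    and cond: "\<forall>m. tensor_eq_End ls rs 1 (\<lambda>_. m) (\<lambda>_. id) n ms (\<lambda>i x. ls (fs i x) m)"
  shows "central_idempotent (\<Sum>i<n. fs i (ms i))"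
proof -
  let ?e = "\<Sum>i<n. fs i (ms i)"
  have "?e * ?e = (\<Sum>i<n. ?e * fs i (ms i))"
    by (rule sum_distrib_left)
  also have "\<dots> = ?e"
    using dual_basis_values_in_corner[OF bimod cond] fs_dual by (intro sum.cong) simp_all
  finally show ?thesis
    using dual_basis_sum_central[OF fs_dual invariant[rule_format]]
    unfolding central_idempotent_def by blast
qed

lemma is_generator_on_central_corner:
  fixes ls :: "'s::ring_1 \<Rightarrow> 'm::ab_group_add \<Rightarrow> 'm" and n :: nat
  assumes e: "central_idempotent e"
    and fs_dual: "\<forall>i<n. fs i \<in> dualM ls"
    and fs_corner: "\<forall>i<n. \<forall>m. e * fs i m = fs i m"
    and e_eq: "e = (\<Sum>i<n. fs i (ms i))"
  shows "is_generator_on {e * s * e | s. True} e (Mmod ls) TYPE('v)"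
proof (rule is_generator_on_dual_basis)
  note corner = central_idempotent_corner_iff[OF e]
  show "\<forall>k\<in>{e * s * e | s. True}. \<forall>l\<in>{e * s * e | s. True}. k + l \<in> {e * s * e | s. True}"
    unfolding Ball_def corner by (simp add: distrib_left)
  show "0 \<in> {e * s * e | s. True}" and "\<forall>i<n. \<forall>m. fs i m \<in> {e * s * e | s. True}"
    unfolding corner using fs_corner by simp_all
  show "\<forall>i<n. fs i \<in> lhom_on {e * s * e | s. True} (Mmod ls) Smod"
    using fs_dual lhom_on_mono[of _ UNIV "Mmod ls" Smod] unfolding dualM_def by blast
qed (rule e_eq)

theorem proposition3p10:
  fixes ls :: "'s::ring_1 \<Rightarrow> 'm::ab_group_add \<Rightarrow> 'm"
    and rs :: "'m \<Rightarrow> 'r::ring_1 \<Rightarrow> 'm"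
    and n :: nat and ms :: "nat \<Rightarrow> 'm" and fs :: "nat \<Rightarrow> 'm \<Rightarrow> 's"
  assumes bimod: "bimodule ls rs"
    and natfull: "coind_naturally_full ls rs TYPE('q)"
    and fs_dual: "\<forall>i<n. fs i \<in> dualM ls"
    and invariant: "\<forall>s. tensor_eq_dual ls rs n (\<lambda>i. ls s (ms i)) fs n ms (\<lambda>i x. fs i x * s)"
    and cond: "\<forall>m. tensor_eq_End ls rs 1 (\<lambda>_. m) (\<lambda>_. id) n ms (\<lambda>i x. ls (fs i x) m)"
  shows "let e = (\<Sum>i<n. fs i (ms i));
             S1 = {e * s * e | s. True};
             S2 = {(1 - e) * s * (1 - e) | s. True}
         in (\<forall>s. e * s = s * e) \<and> e * e = e \<and>
            (\<forall>s m. ls s m = ls (s * e) m \<and> ls (s * e) m = ls (e * s * e) m) \<and>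
            (\<exists>\<phi> :: 's \<Rightarrow> 's \<times> 's. bij_betw \<phi> UNIV (S1 \<times> S2) \<and>
                 (\<forall>s t. \<phi> (s + t) = (fst (\<phi> s) + fst (\<phi> t), snd (\<phi> s) + snd (\<phi> t))) \<and>
                 (\<forall>s t. \<phi> (s * t) = (fst (\<phi> s) * fst (\<phi> t), snd (\<phi> s) * snd (\<phi> t))) \<and>
                 \<phi> 1 = (e, 1 - e)) \<and>
            is_generator_on S1 e (Mmod ls) TYPE('v)"
proof -
  define e where "e = (\<Sum>i<n. fs i (ms i))"
  have e: "central_idempotent e"
    unfolding e_def using bimod fs_dual invariant cond by (rule dual_basis_sum_central_idempotent)
  have acts: "ls s m = ls (s * e) m \<and> ls (s * e) m = ls (e * s * e) m" for s m
    using bimodule_smult_corner[OF bimod e] dual_basis_sum_acts_as_one[OF bimod] cond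
    unfolding e_def by blast
  have gen: "is_generator_on {e * s * e | s. True} e (Mmod ls) TYPE('v)"
    using is_generator_on_central_corner[OF e fs_dual _ e_def]
      dual_basis_values_in_corner[OF bimod cond] fs_dual
    unfolding e_def by blast
  show ?thesis
    unfolding Let_def e_def[symmetric]
    using central_idempotent_commute[OF e] central_idempotent_idem[OF e] acts
      central_idempotent_ring_decomposition[OF e] gen
    by (intro conjI allI) fast+
qed

end
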